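(* Let $R,S$ be finite nonempty sets, $k$ a positive integer, $p_r>0$ ($r\in R$), $T=\sum_{r\in R}p_r$, $d_{r,s}\ge0$, and $\kappa<0$. Let $F$ be the set of $(\mathbf x,\mathbf y)$ with $x_s,y_{r,s}\in\{0,1\}$, $\sum_{s\in S}x_s=k$, $y_{r,s}\le x_s$, and $\sum_{s\in S}y_{r,s}=1$ for all $r$. For $\mathbf y$ let $\overline{\mathcal K}(\mathbf y)=\sum_{r,s}p_ry_{r,s}e^{-\kappa d_{r,s}}$ and $\mathcal K(\mathbf y)=-\frac1\kappa\ln\left(\frac1T\overline{\mathcal K}(\mathbf y)\right)$. Let $U\subseteq S$, and suppose $c_s=c$ for all $s\in U$ with $c\ge 0$; let $\sigma(\mathbf x)=\sum_{s\in U}c_sx_s$. Let $\hat{\mathcal K}\in\mathbb R$ and let $(\mathbf x^*,\mathbf y^*,v^*,q^* )$ be optimal for \[ \text{(KPL}^p)\quad \min\ \overline{\mathcal K}(\mathbf y)+Te^{-\kappa\hat{\mathcal K}}(v-1)\ \text{ s.t. } (\mathbf x,\mathbf y)\in F,\ v\ge e^{q},\ q=-\kappa\,\sigma(\mathbf x), \] with $\sigma^*=\sigma(\mathbf x^* )$, $q^*=-\kappa\sigma^*$, $\mathcal K^*=\mathcal K(\mathbf y^* )$. Let $n=\min\{k,|U|\}$ and linearization points $\beta_i:=-\kappa c\, i$ for $i=0,1,\dots,n$, and $g(q)=\max_{0\le i\le n}\left(e^{\beta_i}+e^{\beta_i}(q-\beta_i)\right)$ (the tangent-line lower approximation of $e^q$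 used in the linearized model (KPL$^t$), in which $v\ge e^q$ is replaced by $v\ge e^{\beta_i}+e^{\beta_i}(q-\beta_i)$ for all $i$). Define $\hat\sigma$ and $\ddot\sigma$ by \[ \mathcal K^*+\hat\sigma=-\tfrac1\kappa\ln\left(\tfrac1T\left(\overline{\mathcal K}(\mathbf y^* )+Te^{-\kappa\hat{\mathcal K}}\left(e^{q^*}-1\right)\right)\right),\quad \mathcal K^*+\ddot\sigma=-\tfrac1\kappa\ln\left(\tfrac1T\left(\overline{\mathcal K}(\mathbf y^* )+Te^{-\kappa\hat{\mathcal K}}\left(g(q^* )-1\right)\right)\right). \] Then $\ddot\sigma=\hat\sigma$.
   Context: $\hat\sigma$ is the penalty applied to the optimal Kolm–Pollak score by the model with the exact exponential constraint, and $\ddot\sigma$ the penalty applied when the exponential is replaced by its lower-bounding tangent lines at the points $\beta_i$. *)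

theory Defs
  imports Complex_Main
begin

definition feasF :: "nat \<Rightarrow> 'r set \<Rightarrow> 's set \<Rightarrow> ('s \<Rightarrow> real) \<Rightarrow> ('r \<Rightarrow> 's \<Rightarrow> real) \<Rightarrow> bool" where
  "feasF k R S x y \<longleftrightarrow>
     (\<forall>s\<in>S. x s \<in> {0,1}) \<and> (\<forall>r\<in>R. \<forall>s\<in>S. y r s \<in> {0,1}) \<and>
     (\<Sum>s\<in>S. x s) = real k \<and>
     (\<forall>r\<in>R. \<forall>s\<in>S. y r s \<le> x s) \<and>
     (\<forall>r\<in>R. (\<Sum>s\<in>S. y r s) = 1)"

definition Kbar :: "'r set \<Rightarrow> 's set \<Rightarrow> ('r \<Rightarrow> real) \<Rightarrow> ('r \<Rightarrow> 's \<Rightarrow> real) \<Rightarrow> real \<Rightarrow> ('r \<Rightarrow> 's \<Rightarrow> real) \<Rightarrow> real" where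
  "Kbar R S p d \<kappa> y = (\<Sum>r\<in>R. \<Sum>s\<in>S. p r * y r s * exp (- \<kappa> * d r s))"

definition KP :: "'r set \<Rightarrow> 's set \<Rightarrow> ('r \<Rightarrow> real) \<Rightarrow> ('r \<Rightarrow> 's \<Rightarrow> real) \<Rightarrow> real \<Rightarrow> ('r \<Rightarrow> 's \<Rightarrow> real) \<Rightarrow> real" where
  "KP R S p d \<kappa> y = - (1 / \<kappa>) * ln ((1 / (\<Sum>r\<in>R. p r)) * Kbar R S p d \<kappa> y)"

definition sigma :: "'s set \<Rightarrow> ('s \<Rightarrow> real) \<Rightarrow> ('s \<Rightarrow> real) \<Rightarrow> real" where
  "sigma U c x = (\<Sum>s\<in>U. c s * x s)"

definition KPLp_feas :: "nat \<Rightarrow> 'r set \<Rightarrow> 's set \<Rightarrow> 's set \<Rightarrow> ('s \<Rightarrow> real) \<Rightarrow> real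
     \<Rightarrow> ('s \<Rightarrow> real) \<Rightarrow> ('r \<Rightarrow> 's \<Rightarrow> real) \<Rightarrow> real \<Rightarrow> real \<Rightarrow> bool" where
  "KPLp_feas k R S U c \<kappa> x y v q \<longleftrightarrow>
     feasF k R S x y \<and> v \<ge> exp q \<and> q = - \<kappa> * sigma U c x"

definition KPLp_obj :: "'r set \<Rightarrow> 's set \<Rightarrow> ('r \<Rightarrow> real) \<Rightarrow> ('r \<Rightarrow> 's \<Rightarrow> real) \<Rightarrow> real \<Rightarrow> real
     \<Rightarrow> ('r \<Rightarrow> 's \<Rightarrow> real) \<Rightarrow> real \<Rightarrow> real" where
  "KPLp_obj R S p d \<kappa> Khat y v =
     Kbar R S p d \<kappa> y + (\<Sum>r\<in>R. p r) * exp (- \<kappa> * Khat) * (v - 1)"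

definition beta :: "real \<Rightarrow> real \<Rightarrow> nat \<Rightarrow> real" where
  "beta \<kappa> c i = - \<kappa> * c * real i"

definition gtan :: "real \<Rightarrow> real \<Rightarrow> nat \<Rightarrow> real \<Rightarrow> real" where
  "gtan \<kappa> c n q = Max ((\<lambda>i. exp (beta \<kappa> c i) + exp (beta \<kappa> c i) * (q - beta \<kappa> c i)) ` {0..n})"

end

theory Submission
  imports Defs
begin

text \<open>The penalty of an optimal solution has the form \<open>q\<^sup>* = -\<kappa> c m\<close>, where \<open>m\<close> is the number
  of open sites in \<open>U\<close>; since \<open>m \<le> min k |U|\<close>, \<open>q\<^sup>*\<close> is itself one of the linearization points
  \<open>\<beta>\<^sub>m\<close>. The maximum of the tangent lines of the convex function \<open>exp\<close> is bounded by \<open>exp\<close>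
  and touches it at every tangency point, so \<open>g(q\<^sup>*) = exp q\<^sup>*\<close> and both penalties coincide.\<close>

lemma exp_tangent_le: "exp b + exp b * (q - b) \<le> exp (q::real)"
proof -
  have "exp b + exp b * (q - b) = exp b * (1 + (q - b))" by algebra
  also have "\<dots> \<le> exp b * exp (q - b)"
    by (intro mult_left_mono exp_ge_add_one_self) simp
  also have "\<dots> = exp q" by (simp add: exp_diff)
  finally show ?thesis .
qed

lemma gtan_beta_eq_exp:
  assumes "m \<le> n"
  shows "gtan \<kappa> c n (beta \<kappa> c m) = exp (beta \<kappa> c m)"
  unfolding gtan_def
proof (rule antisym)
  show "Max ((\<lambda>i. exp (beta \<kappa> c i) + exp (beta \<kappa> c i) * (beta \<kappa> c m - beta \<kappa> c i)) ` {0..n})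
      \<le> exp (beta \<kappa> c m)"
    by (subst Max_le_iff) (auto simp: exp_tangent_le)
  show "exp (beta \<kappa> c m)
      \<le> Max ((\<lambda>i. exp (beta \<kappa> c i) + exp (beta \<kappa> c i) * (beta \<kappa> c m - beta \<kappa> c i)) ` {0..n})"
    using assms by (intro Max_ge) (auto intro!: rev_image_eqI[of m])
qed

lemma sum_zero_one_eq_card:
  assumes "finite A" "\<forall>a\<in>A. f a \<in> {0, 1::real}"
  shows "(\<Sum>a\<in>A. f a) = real (card {a\<in>A. f a = 1})"
proof -
  have "(\<Sum>a\<in>A. f a) = (\<Sum>a\<in>A. if f a = 1 then 1 else 0)"
    using assms(2) by (intro sum.cong) auto
  also have "\<dots> = real (card {a\<in>A. f a = 1})"
    using assms(1) by (simp add: sum.If_cases Collect_conj_eq Int_commute)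
  finally show ?thesis .
qed

lemma sigma_const_weights:
  assumes "\<forall>s\<in>U. cs s = c"
  shows "sigma U cs x = c * (\<Sum>s\<in>U. x s)"
  unfolding sigma_def using assms by (simp add: sum_distrib_left)

lemma feasF_open_sites_in_subset:
  assumes "feasF k R S x y" "finite S" "U \<subseteq> S"
  obtains m where "m \<le> min k (card U)" "(\<Sum>s\<in>U. x s) = real m"
proof -
  have finU: "finite U" using assms(2,3) finite_subset by blast
  have x01: "\<forall>s\<in>S. x s \<in> {0,1}" and sum_k: "(\<Sum>s\<in>S. x s) = real k"
    using assms(1) unfolding feasF_def by auto
  define m where "m = card {s\<in>U. x s = 1}"
  have sum_m: "(\<Sum>s\<in>U. x s) = real m"
    unfolding m_def using finU x01 assms(3) by (intro sum_zero_one_eq_card) auto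
  have "m \<le> card U" unfolding m_def using finU by (intro card_mono) auto
  moreover have "(\<Sum>s\<in>U. x s) \<le> (\<Sum>s\<in>S. x s)"
    using x01 assms(2,3) by (intro sum_mono2) auto
  then have "m \<le> k" using sum_m sum_k by simp
  ultimately show ?thesis using that sum_m by simp
qed

theorem proposition3:
  fixes R :: "'r set" and S :: "'s set" and k :: nat
    and p :: "'r \<Rightarrow> real" and d :: "'r \<Rightarrow> 's \<Rightarrow> real" and \<kappa> :: real
    and U :: "'s set" and cs :: "'s \<Rightarrow> real" and c :: real and Khat :: real
    and xs :: "'s \<Rightarrow> real" and ys :: "'r \<Rightarrow> 's \<Rightarrow> real" and vs qs :: real
    and sigma_hat sigma_ddot :: real
  assumes "finite R" "R \<noteq> {}" "finite S" "S \<noteq> {}" "k > 0"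
    and "\<forall>r\<in>R. p r > 0"
    and "\<forall>r\<in>R. \<forall>s\<in>S. d r s \<ge> 0"
    and "\<kappa> < 0"
    and "U \<subseteq> S" and "\<forall>s\<in>U. cs s = c" and "c \<ge> 0"
    and opt_feas: "KPLp_feas k R S U cs \<kappa> xs ys vs qs"
    and opt_min: "\<forall>x y v q. KPLp_feas k R S U cs \<kappa> x y v q \<longrightarrow>
                    KPLp_obj R S p d \<kappa> Khat ys vs \<le> KPLp_obj R S p d \<kappa> Khat y v"
    and hat: "KP R S p d \<kappa> ys + sigma_hat =
       - (1 / \<kappa>) * ln ((1 / (\<Sum>r\<in>R. p r)) *
          (Kbar R S p d \<kappa> ys + (\<Sum>r\<in>R. p r) * exp (- \<kappa> * Khat) * (exp qs - 1)))"
    and ddot: "KP R S p d \<kappa> ys + sigma_ddot =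
       - (1 / \<kappa>) * ln ((1 / (\<Sum>r\<in>R. p r)) *
          (Kbar R S p d \<kappa> ys + (\<Sum>r\<in>R. p r) * exp (- \<kappa> * Khat) *
             (gtan \<kappa> c (min k (card U)) qs - 1)))"
  shows "sigma_ddot = sigma_hat"
proof -
  have feas: "feasF k R S xs ys" and qs_def: "qs = - \<kappa> * sigma U cs xs"
    using opt_feas unfolding KPLp_feas_def by auto
  obtain m where m_le: "m \<le> min k (card U)" and sum_m: "(\<Sum>s\<in>U. xs s) = real m"
    using feasF_open_sites_in_subset[OF feas \<open>finite S\<close> \<open>U \<subseteq> S\<close>] .
  have "qs = beta \<kappa> c m"
    using qs_def sum_m sigma_const_weights[OF \<open>\<forall>s\<in>U. cs s = c\<close>] unfolding beta_def by simp
  then have "gtan \<kappa> c (min k (card U)) qs = exp qs"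
    using gtan_beta_eq_exp[OF m_le] by simp
  then show ?thesis using hat ddot by simp
qed

end
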